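(* Let $T$ be a $C_{p^rq^s}$-transfer system with exactly two connected components. If the connected component of $(0,0)$ equals $L_{(\ell,k)}$ for some $\ell<r$ and $k<s$, then $T$ is not lesser simply paired.
   Context: $p,q$ are distinct primes and $r,s\ge 0$ integers. The subgroups of $C_{p^rq^s}$ are identified with grid points $(i,j)$, $0\le i\le r$, $0\le j\le s$, where $(i,j)$ stands for $C_{p^iq^j}$ (intersection is coordinatewise minimum). A $C_{p^rq^s}$-transfer system is a partial order $\to$ on these vertices such that: $(i_1,j_1)\to(i_2,j_2)$ implies $i_1\le i_2$, $j_1\le j_2$; it is reflexive and transitive; and $(i_1,j_1)\to(i_2,j_2)$ implies $(\min\{i_1,a\},\min\{j_1,b\})\to(\min\{i_2,a\},\min\{j_2,b\})$ for every vertex $(a,b)$. Connected components are those of the underlying undirected graph. $L_{(\ell,k)}=\{(i,j): 0\le i\le\ell,\ 0\le j\le s\}\cup\{(i,j): 0\le i\le r,\ 0\le j\le k\}$. A transfer system is saturated if whenever $L\le K\le H$ and $L\to H$ is in it then $K\to H$ is in it; $\mathrm{Hull}(T)$ is the smallest saturated transfer system containing $T$; $T_c$ is the complete transfer system. A pair $(T,T')$ is compatible if $T\subseteq T'$ and for all subgroups $A,B,C$ with $B,C\le A$: if $B\to A$ is in $T$ and $B\cap C\to B$ is in $T'$ then $C\to A$ is in $T'$. $T$ is lesser simply paired if for every transfer system $T'\supseteq T$, $(T,T')$ is compatible iff $T'\in\{\mathrm{Hull}(T),T_c\}$. *)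

theory Defs
  imports Main
begin

(* Subgroups of C_{p^r q^s} are grid points (i,j), 0<=i<=r, 0<=j<=s;
   (i,j) stands for C_{p^i q^j}. *)
type_synonym vtx = "nat \<times> nat"

definition grid :: "nat \<Rightarrow> nat \<Rightarrow> vtx set" where
  "grid r s = {(i,j). i \<le> r \<and> j \<le> s}"

definition sub :: "vtx \<Rightarrow> vtx \<Rightarrow> bool" where
  "sub a b \<longleftrightarrow> fst a \<le> fst b \<and> snd a \<le> snd b"

definition meet :: "vtx \<Rightarrow> vtx \<Rightarrow> vtx" where
  "meet a b = (min (fst a) (fst b), min (snd a) (snd b))"

(* a transfer system is a relation T, (x,y) \<in> T meaning x \<rightarrow> y *)
definition transfer_system :: "nat \<Rightarrow> nat \<Rightarrow> vtx rel \<Rightarrow> bool" where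
  "transfer_system r s T \<longleftrightarrow>
     T \<subseteq> grid r s \<times> grid r s \<and>
     (\<forall>x y. (x,y) \<in> T \<longrightarrow> sub x y) \<and>
     (\<forall>x\<in>grid r s. (x,x) \<in> T) \<and>
     trans T \<and>
     (\<forall>x y v. (x,y) \<in> T \<longrightarrow> v \<in> grid r s \<longrightarrow> (meet x v, meet y v) \<in> T)"

definition component :: "nat \<Rightarrow> nat \<Rightarrow> vtx rel \<Rightarrow> vtx \<Rightarrow> vtx set" where
  "component r s T x = {y \<in> grid r s. (x,y) \<in> (T \<union> T\<inverse>)\<^sup>*}"

definition components :: "nat \<Rightarrow> nat \<Rightarrow> vtx rel \<Rightarrow> vtx set set" where
  "components r s T = component r s T ` grid r s"

definition Lset :: "nat \<Rightarrow> nat \<Rightarrow> nat \<Rightarrow> nat \<Rightarrow> vtx set" where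
  "Lset r s l k = {(i,j). i \<le> l \<and> j \<le> s} \<union> {(i,j). i \<le> r \<and> j \<le> k}"

definition saturated :: "nat \<Rightarrow> nat \<Rightarrow> vtx rel \<Rightarrow> bool" where
  "saturated r s T \<longleftrightarrow>
     (\<forall>L\<in>grid r s. \<forall>K\<in>grid r s. \<forall>H\<in>grid r s.
        sub L K \<longrightarrow> sub K H \<longrightarrow> (L,H) \<in> T \<longrightarrow> (K,H) \<in> T)"

definition Tc :: "nat \<Rightarrow> nat \<Rightarrow> vtx rel" where
  "Tc r s = {(x,y). x \<in> grid r s \<and> y \<in> grid r s \<and> sub x y}"

definition Hull :: "nat \<Rightarrow> nat \<Rightarrow> vtx rel \<Rightarrow> vtx rel" where
  "Hull r s T = \<Inter>{T'. transfer_system r s T' \<and> saturated r s T' \<and> T \<subseteq> T'}"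

definition compatible :: "nat \<Rightarrow> nat \<Rightarrow> vtx rel \<Rightarrow> vtx rel \<Rightarrow> bool" where
  "compatible r s T T' \<longleftrightarrow> T \<subseteq> T' \<and>
     (\<forall>A\<in>grid r s. \<forall>B\<in>grid r s. \<forall>C\<in>grid r s.
        sub B A \<longrightarrow> sub C A \<longrightarrow> (B,A) \<in> T \<longrightarrow> (meet B C, B) \<in> T' \<longrightarrow> (C,A) \<in> T')"

definition lesser_simply_paired :: "nat \<Rightarrow> nat \<Rightarrow> vtx rel \<Rightarrow> bool" where
  "lesser_simply_paired r s T \<longleftrightarrow>
     (\<forall>T'. transfer_system r s T' \<and> T \<subseteq> T' \<longrightarrow>
        (compatible r s T T' \<longleftrightarrow> (T' = Hull r s T \<or> T' = Tc r s)))"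

end

theory Submission
  imports Defs
begin

text \<open>The component \<open>L\<close> of \<open>(0,0)\<close> is closed under the transfers of \<open>T\<close>, so \<open>T\<close>
  lies in the saturated transfer system \<open>D = Lsplit\<close> of all inclusions inside \<open>L\<close> or inside its
  complement; hence so does \<open>Hull T\<close>. Enlarging \<open>D\<close> by all inclusions from the strip
  \<open>j \<le> k\<close> into the complement gives a transfer system \<open>T' = Lsplit_via_strip\<close> compatible with \<open>T\<close>.
  It contains \<open>(0,0) \<rightarrow> (r,s)\<close>, which \<open>D\<close> does not, and misses \<open>(0,s) \<rightarrow> (r,s)\<close>, so
  \<open>T'\<close> is neither \<open>Hull T\<close> nor complete.\<close>

definition Lsplit :: "nat \<Rightarrow> nat \<Rightarrow> nat \<Rightarrow> nat \<Rightarrow> vtx rel" where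
  "Lsplit r s l k = {(x,y). x \<in> grid r s \<and> y \<in> grid r s \<and> sub x y \<and>
      (fst y \<le> l \<or> snd y \<le> k \<or> (fst x > l \<and> snd x > k))}"

definition Lsplit_via_strip :: "nat \<Rightarrow> nat \<Rightarrow> nat \<Rightarrow> nat \<Rightarrow> vtx rel" where
  "Lsplit_via_strip r s l k = {(x,y). x \<in> grid r s \<and> y \<in> grid r s \<and> sub x y \<and>
      (fst y \<le> l \<or> snd y \<le> k \<or> fst x > l \<or> snd x \<le> k)}"

lemma transfer_system_Lsplit: "transfer_system r s (Lsplit r s l k)"
  unfolding transfer_system_def Lsplit_def trans_def
  by (auto simp: grid_def sub_def meet_def min_def)

lemma saturated_Lsplit: "saturated r s (Lsplit r s l k)"
  unfolding saturated_def Lsplit_def by (auto simp: grid_def sub_def)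

lemma transfer_system_Lsplit_via_strip: "transfer_system r s (Lsplit_via_strip r s l k)"
  unfolding transfer_system_def Lsplit_via_strip_def trans_def
  by (auto simp: grid_def sub_def meet_def min_def)

lemma Lsplit_subset_via_strip: "Lsplit r s l k \<subseteq> Lsplit_via_strip r s l k"
  unfolding Lsplit_def Lsplit_via_strip_def by auto

lemma compatible_Lsplit_via_strip:
  assumes "T \<subseteq> Lsplit r s l k"
  shows "compatible r s T (Lsplit_via_strip r s l k)"
  unfolding compatible_def
proof (intro conjI ballI impI)
  show "T \<subseteq> Lsplit_via_strip r s l k"
    using assms Lsplit_subset_via_strip by blast
next
  fix A B C
  assume "A \<in> grid r s" "B \<in> grid r s" "C \<in> grid r s" "sub B A" "sub C A"
    "(B, A) \<in> T" "(meet B C, B) \<in> Lsplit_via_strip r s l k"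
  then show "(C, A) \<in> Lsplit_via_strip r s l k"
    using assms unfolding Lsplit_via_strip_def Lsplit_def
    by (auto simp: grid_def sub_def meet_def min_def split: if_splits)
qed

lemma Hull_least:
  assumes "transfer_system r s T'" "saturated r s T'" "T \<subseteq> T'"
  shows "Hull r s T \<subseteq> T'"
  unfolding Hull_def using assms by blast

lemma component_closed_under_transfer:
  assumes "x \<in> component r s T z" "(x, y) \<in> T" "y \<in> grid r s"
  shows "y \<in> component r s T z"
proof -
  have "(z, x) \<in> (T \<union> T\<inverse>)\<^sup>*" using assms(1) unfolding component_def by auto
  then have "(z, y) \<in> (T \<union> T\<inverse>)\<^sup>*" using assms(2) by (simp add: rtrancl_into_rtrancl)
  then show ?thesis using assms(3) unfolding component_def by auto
qed

lemma subset_Lsplit: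
  assumes ts: "transfer_system r s T"
    and comp: "component r s T (0,0) = Lset r s l k"
  shows "T \<subseteq> Lsplit r s l k"
proof clarify
  fix x y assume xy: "(x, y) \<in> T"
  have grid: "x \<in> grid r s" "y \<in> grid r s" and "sub x y"
    using ts xy unfolding transfer_system_def by blast+
  have "x \<in> Lset r s l k \<Longrightarrow> y \<in> Lset r s l k"
    using component_closed_under_transfer[of x r s T "(0,0)" y] comp xy grid by simp
  with grid \<open>sub x y\<close> show "(x, y) \<in> Lsplit r s l k"
    unfolding Lsplit_def Lset_def grid_def by force
qed

theorem mainTheorem15:
  fixes r s l k :: nat and T :: "vtx rel"
  assumes "transfer_system r s T"
    and "card (components r s T) = 2"
    and "l < r" and "k < s"
    and "component r s T (0,0) = Lset r s l k"
  shows "\<not> lesser_simply_paired r s T"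
proof
  assume lsp: "lesser_simply_paired r s T"
  have T_split: "T \<subseteq> Lsplit r s l k"
    using subset_Lsplit assms(1,5) .
  have "Lsplit_via_strip r s l k = Hull r s T \<or> Lsplit_via_strip r s l k = Tc r s"
    using lsp transfer_system_Lsplit_via_strip compatible_Lsplit_via_strip[OF T_split]
      T_split Lsplit_subset_via_strip
    unfolding lesser_simply_paired_def by blast
  moreover have "Hull r s T \<subseteq> Lsplit r s l k"
    using Hull_least transfer_system_Lsplit saturated_Lsplit T_split .
  moreover have "((0,0), (r,s)) \<in> Lsplit_via_strip r s l k - Lsplit r s l k"
    using assms(3,4) unfolding Lsplit_via_strip_def Lsplit_def by (auto simp: grid_def sub_def)
  moreover have "((0,s), (r,s)) \<in> Tc r s - Lsplit_via_strip r s l k"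
    using assms(3,4) unfolding Tc_def Lsplit_via_strip_def by (auto simp: grid_def sub_def)
  ultimately show False by blast
qed

end
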